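(* For a right $R$-module $M$ the following are equivalent: (a) $M$ is quasi-projective and finite $\Sigma$-Rickart; (b) every finitely $M$-generated submodule of any module in $\mathrm{add}(M)$ is $M$-projective; (c) every finitely $M$-generated submodule of any module in $\mathrm{add}(M)$ is quasi-projective.
   Context: Modules are unitary right $R$-modules; $M^{(n)}$ is the direct sum of $n$ copies of $M$. $M$ is Rickart if $\ker\varphi$ is a direct summand of $M$ for all $\varphi\in\mathrm{End}_R(M)$; $M$ is finite $\Sigma$-Rickart if $M^{(n)}$ is Rickart for all $n>0$. $\mathrm{add}(M)$ is the class of modules isomorphic to a direct summand of $M^{(n)}$ for some integer $n>0$. A module $N$ is finitely $M$-generated if there is an epimorphism $M^{(n)}\to N$ for some $n>0$. A module is quasi-projective if it is projective relative to itself. *)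

theory Defs
  imports "HOL-Algebra.Ring"
begin

text \<open>A right module structure: the additive group is given by the ring-record fields
  carrier, zero, add (the multiplicative fields are unused), plus a right scalar action.\<close>

record ('a, 'r) rmodule = "'a ring" +
  rsmult :: "'a \<Rightarrow> 'r \<Rightarrow> 'a" (infixl "\<odot>\<index>" 70)

definition right_module :: "('r, 'c) ring_scheme \<Rightarrow> ('a, 'r, 'd) rmodule_scheme \<Rightarrow> bool" where
  "right_module R M \<longleftrightarrow> ring R \<and> abelian_group M \<and>
     (\<forall>x\<in>carrier M. \<forall>r\<in>carrier R. x \<odot>\<^bsub>M\<^esub> r \<in> carrier M) \<and>
     (\<forall>x\<in>carrier M. \<forall>y\<in>carrier M. \<forall>r\<in>carrier R.
        (x \<oplus>\<^bsub>M\<^esub> y) \<odot>\<^bsub>M\<^esub> r = (x \<odot>\<^bsub>M\<^esub> r) \<oplus>\<^bsub>M\<^esub> (y \<odot>\<^bsub>M\<^esub> r)) \<and>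
     (\<forall>x\<in>carrier M. \<forall>r\<in>carrier R. \<forall>s\<in>carrier R.
        x \<odot>\<^bsub>M\<^esub> (r \<oplus>\<^bsub>R\<^esub> s) = (x \<odot>\<^bsub>M\<^esub> r) \<oplus>\<^bsub>M\<^esub> (x \<odot>\<^bsub>M\<^esub> s)) \<and>
     (\<forall>x\<in>carrier M. \<forall>r\<in>carrier R. \<forall>s\<in>carrier R.
        x \<odot>\<^bsub>M\<^esub> (r \<otimes>\<^bsub>R\<^esub> s) = (x \<odot>\<^bsub>M\<^esub> r) \<odot>\<^bsub>M\<^esub> s) \<and>
     (\<forall>x\<in>carrier M. x \<odot>\<^bsub>M\<^esub> \<one>\<^bsub>R\<^esub> = x)"

definition rmod_hom :: "('r, 'c) ring_scheme \<Rightarrow> ('a, 'r, 'd) rmodule_scheme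
    \<Rightarrow> ('b, 'r, 'e) rmodule_scheme \<Rightarrow> ('a \<Rightarrow> 'b) set" where
  "rmod_hom R M N = {f. f \<in> carrier M \<rightarrow> carrier N \<and>
     (\<forall>x\<in>carrier M. \<forall>y\<in>carrier M. f (x \<oplus>\<^bsub>M\<^esub> y) = f x \<oplus>\<^bsub>N\<^esub> f y) \<and>
     (\<forall>x\<in>carrier M. \<forall>r\<in>carrier R. f (x \<odot>\<^bsub>M\<^esub> r) = f x \<odot>\<^bsub>N\<^esub> r)}"

definition rmod_epi :: "('r, 'c) ring_scheme \<Rightarrow> ('a, 'r, 'd) rmodule_scheme
    \<Rightarrow> ('b, 'r, 'e) rmodule_scheme \<Rightarrow> ('a \<Rightarrow> 'b) set" where
  "rmod_epi R M N = {f. f \<in> rmod_hom R M N \<and> f ` carrier M = carrier N}"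

definition rmod_ker :: "('a, 'r, 'd) rmodule_scheme \<Rightarrow> ('b, 'r, 'e) rmodule_scheme
    \<Rightarrow> ('a \<Rightarrow> 'b) \<Rightarrow> 'a set" where
  "rmod_ker M N f = {x \<in> carrier M. f x = \<zero>\<^bsub>N\<^esub>}"

definition submod :: "('r, 'c) ring_scheme \<Rightarrow> 'a set \<Rightarrow> ('a, 'r, 'd) rmodule_scheme \<Rightarrow> bool" where
  "submod R N M \<longleftrightarrow> N \<subseteq> carrier M \<and> \<zero>\<^bsub>M\<^esub> \<in> N \<and>
     (\<forall>x\<in>N. \<forall>y\<in>N. x \<oplus>\<^bsub>M\<^esub> y \<in> N) \<and>
     (\<forall>x\<in>N. \<ominus>\<^bsub>M\<^esub> x \<in> N) \<and>
     (\<forall>x\<in>N. \<forall>r\<in>carrier R. x \<odot>\<^bsub>M\<^esub> r \<in> N)"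

abbreviation subm :: "('a, 'r, 'd) rmodule_scheme \<Rightarrow> 'a set \<Rightarrow> ('a, 'r, 'd) rmodule_scheme" where
  "subm M N \<equiv> M\<lparr>carrier := N\<rparr>"

definition direct_summand :: "('r, 'c) ring_scheme \<Rightarrow> 'a set \<Rightarrow> ('a, 'r, 'd) rmodule_scheme \<Rightarrow> bool" where
  "direct_summand R N M \<longleftrightarrow> submod R N M \<and>
     (\<exists>K. submod R K M \<and> N \<inter> K = {\<zero>\<^bsub>M\<^esub>} \<and>
          (\<forall>x\<in>carrier M. \<exists>a\<in>N. \<exists>b\<in>K. x = a \<oplus>\<^bsub>M\<^esub> b))"

text \<open>The direct sum M^(n) of n copies of M, realised as functions nat => 'a supported on {..<n}.\<close>

definition dsum_pow :: "('a, 'r, 'd) rmodule_scheme \<Rightarrow> nat \<Rightarrow> (nat \<Rightarrow> 'a, 'r) rmodule" where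
  "dsum_pow M n = \<lparr>carrier = {v. (\<forall>i<n. v i \<in> carrier M) \<and> (\<forall>i\<ge>n. v i = \<zero>\<^bsub>M\<^esub>)},
      mult = (\<lambda>v w. undefined), one = undefined,
      zero = (\<lambda>i. \<zero>\<^bsub>M\<^esub>),
      add = (\<lambda>v w i. v i \<oplus>\<^bsub>M\<^esub> w i),
      rsmult = (\<lambda>v r i. if i < n then v i \<odot>\<^bsub>M\<^esub> r else \<zero>\<^bsub>M\<^esub>)\<rparr>"

definition rickart :: "('r, 'c) ring_scheme \<Rightarrow> ('a, 'r, 'd) rmodule_scheme \<Rightarrow> bool" where
  "rickart R M \<longleftrightarrow> (\<forall>\<phi>\<in>rmod_hom R M M. direct_summand R (rmod_ker M M \<phi>) M)"

definition fin_sigma_rickart :: "('r, 'c) ring_scheme \<Rightarrow> ('a, 'r, 'd) rmodule_scheme \<Rightarrow> bool" where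
  "fin_sigma_rickart R M \<longleftrightarrow> (\<forall>n>0. rickart R (dsum_pow M n))"

definition fin_gen_by :: "('r, 'c) ring_scheme \<Rightarrow> ('b, 'r, 'e) rmodule_scheme
    \<Rightarrow> ('a, 'r, 'd) rmodule_scheme \<Rightarrow> bool" where
  "fin_gen_by R N M \<longleftrightarrow> (\<exists>n>0. rmod_epi R (dsum_pow M n) N \<noteq> {})"

text \<open>Every epimorphic image of M
  has cardinality at most that of the carrier of M, so up to isomorphism it suffices to let K
  range over right modules whose elements have the same type as those of M.\<close>

definition rel_projective :: "('r, 'c) ring_scheme \<Rightarrow> ('b, 'r, 'e) rmodule_scheme
    \<Rightarrow> ('a, 'r, 'd) rmodule_scheme \<Rightarrow> bool" where
  "rel_projective R N M \<longleftrightarrow>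
     (\<forall>K :: ('a, 'r) rmodule. \<forall>g f. right_module R K \<and> g \<in> rmod_epi R M K \<and> f \<in> rmod_hom R N K
        \<longrightarrow> (\<exists>h\<in>rmod_hom R N M. \<forall>x\<in>carrier N. g (h x) = f x))"

definition quasi_projective :: "('r, 'c) ring_scheme \<Rightarrow> ('a, 'r, 'd) rmodule_scheme \<Rightarrow> bool" where
  "quasi_projective R M \<longleftrightarrow> rel_projective R M M"

end

theory Submission
  imports Defs
begin

text \<open>
  (a) \<open>\<Rightarrow>\<close> (b): a finitely \<open>M\<close>-generated submodule \<open>N\<close> of \<open>M\<^sup>(\<^sup>n\<^sup>)\<close> is the image of an
  endomorphism of some \<open>M\<^sup>(\<^sup>k\<^sup>)\<close>.  By the Rickart property its kernel is a direct summand, so the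
  epimorphism onto \<open>N\<close> splits and \<open>N\<close> is a retract of \<open>M\<^sup>(\<^sup>k\<^sup>)\<close>, which is \<open>M\<close>-projective because
  \<open>M\<close> is.

  (b) \<open>\<Rightarrow>\<close> (c): an \<open>M\<close>-projective module is \<open>M\<^sup>(\<^sup>m\<^sup>)\<close>-projective (lift modulo the last summand
  through a quotient), hence projective relative to every epimorphic image of \<open>M\<^sup>(\<^sup>m\<^sup>)\<close>, in
  particular relative to \<open>N\<close> itself.

  (c) \<open>\<Rightarrow>\<close> (a): \<open>M \<cong> M\<^sup>(\<^sup>1\<^sup>)\<close> is quasi-projective.  For an endomorphism \<open>\<phi>\<close> of \<open>M\<^sup>(\<^sup>n\<^sup>)\<close> with
  image \<open>I\<close>, the quasi-projectivity of \<open>I \<oplus> M\<^sup>(\<^sup>n\<^sup>) \<subseteq> M\<^sup>(\<^sup>2\<^sup>n\<^sup>)\<close> makes the epimorphism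
  \<open>(u, v) \<mapsto> \<phi> v\<close> onto its summand \<open>I\<close> split; a section of \<open>\<phi>\<close> over \<open>I\<close> exhibits \<open>ker \<phi>\<close> as a
  direct summand.
\<close>

lemma (in abelian_group) add_minus_cancel_left:
  "a \<in> carrier G \<Longrightarrow> b \<in> carrier G \<Longrightarrow> b \<oplus> (a \<ominus> b) = a"
  by (simp add: a_minus_def a_comm[of a] r_neg2)

lemma (in abelian_group) minus_add_cancel_left:
  "a \<in> carrier G \<Longrightarrow> b \<in> carrier G \<Longrightarrow> (b \<oplus> a) \<ominus> b = a"
  by (simp add: a_minus_def a_comm[of b] a_assoc r_neg)

lemma (in abelian_group) a_minus_chain:
  "a \<in> carrier G \<Longrightarrow> b \<in> carrier G \<Longrightarrow> c \<in> carrier G \<Longrightarrow> (a \<ominus> b) \<oplus> (b \<ominus> c) = a \<ominus> c"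
  by (simp add: a_minus_def a_assoc r_neg1)

lemma (in abelian_group) a_minus_swap:
  "a \<in> carrier G \<Longrightarrow> b \<in> carrier G \<Longrightarrow> b \<ominus> a = \<ominus> (a \<ominus> b)"
  by (simp add: a_minus_def minus_add minus_minus a_comm)

lemma rmod_abelian_group: "right_module R M \<Longrightarrow> abelian_group M"
  by (simp add: right_module_def)

lemma rmod_ring: "right_module R M \<Longrightarrow> ring R"
  by (simp add: right_module_def)

lemma rmod_smult_closed:
  "right_module R M \<Longrightarrow> x \<in> carrier M \<Longrightarrow> r \<in> carrier R \<Longrightarrow> x \<odot>\<^bsub>M\<^esub> r \<in> carrier M"
  by (simp add: right_module_def)

lemma rmod_smult_l_distr:
  "right_module R M \<Longrightarrow> x \<in> carrier M \<Longrightarrow> y \<in> carrier M \<Longrightarrow> r \<in> carrier R \<Longrightarrow>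
    (x \<oplus>\<^bsub>M\<^esub> y) \<odot>\<^bsub>M\<^esub> r = (x \<odot>\<^bsub>M\<^esub> r) \<oplus>\<^bsub>M\<^esub> (y \<odot>\<^bsub>M\<^esub> r)"
  by (simp add: right_module_def)

lemma rmod_smult_r_distr:
  "right_module R M \<Longrightarrow> x \<in> carrier M \<Longrightarrow> r \<in> carrier R \<Longrightarrow> s \<in> carrier R \<Longrightarrow>
    x \<odot>\<^bsub>M\<^esub> (r \<oplus>\<^bsub>R\<^esub> s) = (x \<odot>\<^bsub>M\<^esub> r) \<oplus>\<^bsub>M\<^esub> (x \<odot>\<^bsub>M\<^esub> s)"
  by (simp add: right_module_def)

lemma rmod_smult_assoc:
  "right_module R M \<Longrightarrow> x \<in> carrier M \<Longrightarrow> r \<in> carrier R \<Longrightarrow> s \<in> carrier R \<Longrightarrow>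
    x \<odot>\<^bsub>M\<^esub> (r \<otimes>\<^bsub>R\<^esub> s) = (x \<odot>\<^bsub>M\<^esub> r) \<odot>\<^bsub>M\<^esub> s"
  by (simp add: right_module_def)

lemma rmod_smult_one: "right_module R M \<Longrightarrow> x \<in> carrier M \<Longrightarrow> x \<odot>\<^bsub>M\<^esub> \<one>\<^bsub>R\<^esub> = x"
  by (simp add: right_module_def)

lemma rmod_zero_smult:
  assumes M: "right_module R M" and r: "r \<in> carrier R"
  shows "\<zero>\<^bsub>M\<^esub> \<odot>\<^bsub>M\<^esub> r = \<zero>\<^bsub>M\<^esub>"
proof -
  interpret abelian_group M using M by (rule rmod_abelian_group)
  have "\<zero>\<^bsub>M\<^esub> \<odot>\<^bsub>M\<^esub> r \<oplus>\<^bsub>M\<^esub> \<zero>\<^bsub>M\<^esub> \<odot>\<^bsub>M\<^esub> r = \<zero>\<^bsub>M\<^esub> \<odot>\<^bsub>M\<^esub> r"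
    using rmod_smult_l_distr[OF M zero_closed zero_closed r] by simp
  then show ?thesis
    using rmod_smult_closed[OF M zero_closed r] by simp
qed

lemma rmod_a_inv_smult:
  assumes M: "right_module R M" and x: "x \<in> carrier M" and r: "r \<in> carrier R"
  shows "(\<ominus>\<^bsub>M\<^esub> x) \<odot>\<^bsub>M\<^esub> r = \<ominus>\<^bsub>M\<^esub> (x \<odot>\<^bsub>M\<^esub> r)"
proof -
  interpret abelian_group M using M by (rule rmod_abelian_group)
  have "(\<ominus>\<^bsub>M\<^esub> x) \<odot>\<^bsub>M\<^esub> r \<oplus>\<^bsub>M\<^esub> x \<odot>\<^bsub>M\<^esub> r = \<zero>\<^bsub>M\<^esub>"
    using rmod_smult_l_distr[OF M a_inv_closed[OF x] x r] rmod_zero_smult[OF M r] x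
    by (simp add: l_neg)
  then show ?thesis
    using minus_equality rmod_smult_closed[OF M] x r by simp
qed

lemma rmod_minus_smult:
  assumes M: "right_module R M" and "x \<in> carrier M" "y \<in> carrier M" "r \<in> carrier R"
  shows "(x \<ominus>\<^bsub>M\<^esub> y) \<odot>\<^bsub>M\<^esub> r = (x \<odot>\<^bsub>M\<^esub> r) \<ominus>\<^bsub>M\<^esub> (y \<odot>\<^bsub>M\<^esub> r)"
  using assms rmod_smult_l_distr[OF M] rmod_a_inv_smult[OF M]
    abelian_group.a_inv_closed[OF rmod_abelian_group[OF M]]
  by (simp add: a_minus_def)

lemma rmod_homI:
  assumes "\<And>x. x \<in> carrier X \<Longrightarrow> f x \<in> carrier Y"
    and "\<And>x y. x \<in> carrier X \<Longrightarrow> y \<in> carrier X \<Longrightarrow> f (x \<oplus>\<^bsub>X\<^esub> y) = f x \<oplus>\<^bsub>Y\<^esub> f y"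
    and "\<And>x r. x \<in> carrier X \<Longrightarrow> r \<in> carrier R \<Longrightarrow> f (x \<odot>\<^bsub>X\<^esub> r) = f x \<odot>\<^bsub>Y\<^esub> r"
  shows "f \<in> rmod_hom R X Y"
  using assms by (auto simp: rmod_hom_def)

lemma rmod_hom_id: "(\<lambda>x. x) \<in> rmod_hom R X X"
  by (rule rmod_homI) auto

lemma rmod_hom_closed: "f \<in> rmod_hom R X Y \<Longrightarrow> x \<in> carrier X \<Longrightarrow> f x \<in> carrier Y"
  by (auto simp: rmod_hom_def)

lemma rmod_hom_add:
  "f \<in> rmod_hom R X Y \<Longrightarrow> x \<in> carrier X \<Longrightarrow> y \<in> carrier X \<Longrightarrow> f (x \<oplus>\<^bsub>X\<^esub> y) = f x \<oplus>\<^bsub>Y\<^esub> f y"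
  by (auto simp: rmod_hom_def)

lemma rmod_hom_smult:
  "f \<in> rmod_hom R X Y \<Longrightarrow> x \<in> carrier X \<Longrightarrow> r \<in> carrier R \<Longrightarrow> f (x \<odot>\<^bsub>X\<^esub> r) = f x \<odot>\<^bsub>Y\<^esub> r"
  by (auto simp: rmod_hom_def)

lemma rmod_hom_zero:
  assumes f: "f \<in> rmod_hom R X Y" and X: "right_module R X" and Y: "right_module R Y"
  shows "f \<zero>\<^bsub>X\<^esub> = \<zero>\<^bsub>Y\<^esub>"
proof -
  interpret X: abelian_group X using X by (rule rmod_abelian_group)
  interpret Y: abelian_group Y using Y by (rule rmod_abelian_group)
  have "f \<zero>\<^bsub>X\<^esub> \<oplus>\<^bsub>Y\<^esub> f \<zero>\<^bsub>X\<^esub> = f \<zero>\<^bsub>X\<^esub>"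
    using rmod_hom_add[OF f X.zero_closed X.zero_closed] by simp
  then show ?thesis
    using rmod_hom_closed[OF f X.zero_closed] by simp
qed

lemma rmod_hom_a_inv:
  assumes f: "f \<in> rmod_hom R X Y" and X: "right_module R X" and Y: "right_module R Y"
    and x: "x \<in> carrier X"
  shows "f (\<ominus>\<^bsub>X\<^esub> x) = \<ominus>\<^bsub>Y\<^esub> f x"
proof -
  interpret X: abelian_group X using X by (rule rmod_abelian_group)
  interpret Y: abelian_group Y using Y by (rule rmod_abelian_group)
  have "f (\<ominus>\<^bsub>X\<^esub> x) \<oplus>\<^bsub>Y\<^esub> f x = \<zero>\<^bsub>Y\<^esub>"
    using rmod_hom_add[OF f X.a_inv_closed[OF x] x] rmod_hom_zero[OF f X Y] x
    by (simp add: X.l_neg)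
  then show ?thesis
    using Y.minus_equality rmod_hom_closed[OF f] x by simp
qed

lemma rmod_hom_minus:
  assumes f: "f \<in> rmod_hom R X Y" and X: "right_module R X" and Y: "right_module R Y"
    and "x \<in> carrier X" "y \<in> carrier X"
  shows "f (x \<ominus>\<^bsub>X\<^esub> y) = f x \<ominus>\<^bsub>Y\<^esub> f y"
  using assms rmod_hom_add[OF f] rmod_hom_a_inv[OF f X Y]
    abelian_group.a_inv_closed[OF rmod_abelian_group[OF X]]
  by (simp add: a_minus_def)

lemma rmod_hom_comp:
  "f \<in> rmod_hom R X Y \<Longrightarrow> g \<in> rmod_hom R Y Z \<Longrightarrow> (\<lambda>x. g (f x)) \<in> rmod_hom R X Z"
  by (rule rmod_homI) (auto simp: rmod_hom_closed rmod_hom_add rmod_hom_smult)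

lemma rmod_hom_plus:
  assumes f: "f \<in> rmod_hom R X Z" and g: "g \<in> rmod_hom R X Z" and Z: "right_module R Z"
  shows "(\<lambda>x. f x \<oplus>\<^bsub>Z\<^esub> g x) \<in> rmod_hom R X Z"
proof -
  interpret Z: abelian_group Z using Z by (rule rmod_abelian_group)
  have closed: "f x \<in> carrier Z" "g x \<in> carrier Z" if "x \<in> carrier X" for x
    using f g that by (auto simp: rmod_hom_closed)
  show ?thesis
    by (rule rmod_homI)
      (auto simp: closed rmod_hom_add[OF f] rmod_hom_add[OF g] rmod_hom_smult[OF f]
        rmod_hom_smult[OF g] rmod_smult_l_distr[OF Z] Z.a_ac)
qed

lemma rmod_hom_diff:
  assumes f: "f \<in> rmod_hom R X Z" and g: "g \<in> rmod_hom R X Z" and Z: "right_module R Z"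
  shows "(\<lambda>x. f x \<ominus>\<^bsub>Z\<^esub> g x) \<in> rmod_hom R X Z"
proof -
  interpret Z: abelian_group Z using Z by (rule rmod_abelian_group)
  have closed: "f x \<in> carrier Z" "g x \<in> carrier Z" if "x \<in> carrier X" for x
    using f g that by (auto simp: rmod_hom_closed)
  show ?thesis
  proof (rule rmod_homI)
    fix x y assume "x \<in> carrier X" "y \<in> carrier X"
    then show "f (x \<oplus>\<^bsub>X\<^esub> y) \<ominus>\<^bsub>Z\<^esub> g (x \<oplus>\<^bsub>X\<^esub> y) = (f x \<ominus>\<^bsub>Z\<^esub> g x) \<oplus>\<^bsub>Z\<^esub> (f y \<ominus>\<^bsub>Z\<^esub> g y)"
      by (simp add: closed rmod_hom_add[OF f] rmod_hom_add[OF g] a_minus_def Z.minus_add Z.a_ac)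
  qed (simp_all add: closed rmod_hom_smult[OF f] rmod_hom_smult[OF g] rmod_minus_smult[OF Z])
qed

lemma rmod_epi_comp:
  "f \<in> rmod_epi R X Y \<Longrightarrow> g \<in> rmod_epi R Y Z \<Longrightarrow> (\<lambda>x. g (f x)) \<in> rmod_epi R X Z"
  unfolding rmod_epi_def by (auto simp: rmod_hom_comp image_image[symmetric])

section \<open>Submodules, kernels and direct summands\<close>

lemma submodD:
  assumes "submod R U K"
  shows "U \<subseteq> carrier K" "\<zero>\<^bsub>K\<^esub> \<in> U" "\<And>x y. x \<in> U \<Longrightarrow> y \<in> U \<Longrightarrow> x \<oplus>\<^bsub>K\<^esub> y \<in> U"
    "\<And>x. x \<in> U \<Longrightarrow> \<ominus>\<^bsub>K\<^esub> x \<in> U" "\<And>x r. x \<in> U \<Longrightarrow> r \<in> carrier R \<Longrightarrow> x \<odot>\<^bsub>K\<^esub> r \<in> U"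
  using assms by (auto simp: submod_def)

lemma submod_carrier:
  assumes M: "right_module R M"
  shows "submod R (carrier M) M"
proof -
  interpret abelian_group M using M by (rule rmod_abelian_group)
  show ?thesis by (auto simp: submod_def rmod_smult_closed[OF M])
qed

lemma submod_zero:
  assumes M: "right_module R M"
  shows "submod R {\<zero>\<^bsub>M\<^esub>} M"
proof -
  interpret abelian_group M using M by (rule rmod_abelian_group)
  show ?thesis by (auto simp: submod_def rmod_zero_smult[OF M] minus_equality)
qed

lemma direct_summand_carrier:
  assumes M: "right_module R M"
  shows "direct_summand R (carrier M) M"
proof -
  interpret abelian_group M using M by (rule rmod_abelian_group)
  show ?thesis
    unfolding direct_summand_def
    using submod_carrier[OF M] submod_zero[OF M] by (intro conjI exI[of _ "{\<zero>\<^bsub>M\<^esub>}"]) auto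
qed

lemma submod_right_module:
  assumes X: "right_module R X" and N: "submod R N X"
  shows "right_module R (subm X N)"
proof -
  interpret abelian_group X using X by (rule rmod_abelian_group)
  note N = submodD[OF N]
  have "abelian_group (subm X N)"
  proof (rule abelian_groupI)
    fix x assume x: "x \<in> carrier (subm X N)"
    then have "\<ominus>\<^bsub>X\<^esub> x \<in> N" "\<ominus>\<^bsub>X\<^esub> x \<oplus>\<^bsub>X\<^esub> x = \<zero>\<^bsub>X\<^esub>"
      using N(1,4) by (auto intro: l_neg)
    then show "\<exists>y\<in>carrier (subm X N). y \<oplus>\<^bsub>subm X N\<^esub> x = \<zero>\<^bsub>subm X N\<^esub>" by auto
  qed (use N(1-3) in \<open>auto simp: subsetD a_ac\<close>)
  then show ?thesis
    unfolding right_module_def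
    using X N(1,5) by (auto simp: subsetD rmod_ring rmod_smult_l_distr rmod_smult_r_distr
        rmod_smult_assoc rmod_smult_one)
qed

lemma submod_image:
  assumes f: "f \<in> rmod_hom R X Y" and X: "right_module R X" and Y: "right_module R Y"
  shows "submod R (f ` carrier X) Y"
proof -
  interpret X: abelian_group X using X by (rule rmod_abelian_group)
  show ?thesis
    unfolding submod_def
  proof (intro conjI ballI)
    show "f ` carrier X \<subseteq> carrier Y" using rmod_hom_closed[OF f] by blast
    show "\<zero>\<^bsub>Y\<^esub> \<in> f ` carrier X"
      using rmod_hom_zero[OF f X Y, symmetric] X.zero_closed by (rule image_eqI)
  next
    fix x y assume "x \<in> f ` carrier X" "y \<in> f ` carrier X"
    then obtain a b where "a \<in> carrier X" "b \<in> carrier X" "x = f a" "y = f b" by blast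
    then show "x \<oplus>\<^bsub>Y\<^esub> y \<in> f ` carrier X"
      using rmod_hom_add[OF f] by (auto intro!: image_eqI[of _ _ "a \<oplus>\<^bsub>X\<^esub> b"])
  next
    fix x assume "x \<in> f ` carrier X"
    then obtain a where "a \<in> carrier X" "x = f a" by blast
    then show "\<ominus>\<^bsub>Y\<^esub> x \<in> f ` carrier X"
      using rmod_hom_a_inv[OF f X Y] by (auto intro!: image_eqI[of _ _ "\<ominus>\<^bsub>X\<^esub> a"])
  next
    fix x r assume "x \<in> f ` carrier X" "r \<in> carrier R"
    then obtain a where "a \<in> carrier X" "x = f a" by blast
    then show "x \<odot>\<^bsub>Y\<^esub> r \<in> f ` carrier X"
      using rmod_hom_smult[OF f] rmod_smult_closed[OF X] \<open>r \<in> carrier R\<close>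
      by (auto intro!: image_eqI[of _ _ "a \<odot>\<^bsub>X\<^esub> r"])
  qed
qed

lemma submod_vimage:
  assumes f: "f \<in> rmod_hom R X Y" and X: "right_module R X" and Y: "right_module R Y"
    and N: "submod R N Y"
  shows "submod R {x \<in> carrier X. f x \<in> N} X"
proof -
  interpret X: abelian_group X using X by (rule rmod_abelian_group)
  note N = submodD[OF N]
  show ?thesis
    unfolding submod_def
  proof (intro conjI ballI)
    show "{x \<in> carrier X. f x \<in> N} \<subseteq> carrier X" by blast
    show "\<zero>\<^bsub>X\<^esub> \<in> {x \<in> carrier X. f x \<in> N}"
      using N(2) rmod_hom_zero[OF f X Y] by simp
  next
    fix x y assume "x \<in> {x \<in> carrier X. f x \<in> N}" "y \<in> {x \<in> carrier X. f x \<in> N}"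
    then show "x \<oplus>\<^bsub>X\<^esub> y \<in> {x \<in> carrier X. f x \<in> N}"
      using N(3) rmod_hom_add[OF f] by simp
  next
    fix x assume "x \<in> {x \<in> carrier X. f x \<in> N}"
    then show "\<ominus>\<^bsub>X\<^esub> x \<in> {x \<in> carrier X. f x \<in> N}"
      using N(4) rmod_hom_a_inv[OF f X Y] by simp
  next
    fix x r assume "x \<in> {x \<in> carrier X. f x \<in> N}" "r \<in> carrier R"
    then show "x \<odot>\<^bsub>X\<^esub> r \<in> {x \<in> carrier X. f x \<in> N}"
      using N(5) rmod_hom_smult[OF f] rmod_smult_closed[OF X] by simp
  qed
qed

lemma submod_kernel:
  assumes "f \<in> rmod_hom R X Y" "right_module R X" "right_module R Y"
  shows "submod R (rmod_ker X Y f) X"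
  using submod_vimage[OF assms submod_zero[OF assms(3)]] by (simp add: rmod_ker_def)

lemma rmod_hom_subm_incl: "submod R N X \<Longrightarrow> (\<lambda>x. x) \<in> rmod_hom R (subm X N) X"
  by (rule rmod_homI) (auto simp: submod_def)

lemma rmod_hom_into_subm:
  "f \<in> rmod_hom R Y X \<Longrightarrow> (\<And>y. y \<in> carrier Y \<Longrightarrow> f y \<in> N) \<Longrightarrow> f \<in> rmod_hom R Y (subm X N)"
  by (auto simp: rmod_hom_def)

lemma rmod_hom_restrict_subm:
  "f \<in> rmod_hom R X Y \<Longrightarrow> submod R N X \<Longrightarrow> f \<in> rmod_hom R (subm X N) Y"
  using rmod_hom_comp[OF rmod_hom_subm_incl] by fastforce

lemma rmod_epi_onto_image:
  "f \<in> rmod_hom R X Y \<Longrightarrow> f \<in> rmod_epi R X (subm Y (f ` carrier X))"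
  by (auto simp: rmod_epi_def rmod_hom_def)

lemma rmod_hom_the_inv_into:
  assumes f: "f \<in> rmod_hom R X Y" and X: "right_module R X" and C: "submod R C X"
    and inj: "inj_on f C" and onto: "f ` C = carrier Y"
  shows "the_inv_into C f \<in> rmod_hom R Y X"
proof -
  note C = submodD[OF C]
  have inv: "the_inv_into C f y \<in> C" "f (the_inv_into C f y) = y" if "y \<in> carrier Y" for y
    using that inj onto by (auto intro: the_inv_into_into f_the_inv_into_f)
  have inv_eq: "the_inv_into C f y = c" if "c \<in> C" "f c = y" for y c
    using that inj by (auto intro: the_inv_into_f_eq)
  show ?thesis
  proof (rule rmod_homI)
    fix y assume "y \<in> carrier Y"
    then show "the_inv_into C f y \<in> carrier X" using inv C(1) by blast
  next
    fix x y assume "x \<in> carrier Y" "y \<in> carrier Y"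
    then show "the_inv_into C f (x \<oplus>\<^bsub>Y\<^esub> y) = the_inv_into C f x \<oplus>\<^bsub>X\<^esub> the_inv_into C f y"
      using inv C(1,3) rmod_hom_add[OF f] by (intro inv_eq) (auto simp: subsetD)
  next
    fix y r assume "y \<in> carrier Y" "r \<in> carrier R"
    then show "the_inv_into C f (y \<odot>\<^bsub>Y\<^esub> r) = the_inv_into C f y \<odot>\<^bsub>X\<^esub> r"
      using inv C(1,5) rmod_hom_smult[OF f] by (intro inv_eq) (auto simp: subsetD)
  qed
qed

lemma rmod_epi_section_if_kernel_summand:
  assumes X: "right_module R X" and Y: "right_module R Y"
    and f: "f \<in> rmod_epi R X Y" and ds: "direct_summand R (rmod_ker X Y f) X"
  shows "\<exists>s\<in>rmod_hom R Y X. \<forall>y\<in>carrier Y. f (s y) = y"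
proof -
  interpret X: abelian_group X using X by (rule rmod_abelian_group)
  interpret Y: abelian_group Y using Y by (rule rmod_abelian_group)
  have fh: "f \<in> rmod_hom R X Y" and onto_Y: "f ` carrier X = carrier Y"
    using f by (auto simp: rmod_epi_def)
  obtain C where C: "submod R C X" and disj: "rmod_ker X Y f \<inter> C = {\<zero>\<^bsub>X\<^esub>}"
    and span: "\<forall>x\<in>carrier X. \<exists>a\<in>rmod_ker X Y f. \<exists>c\<in>C. x = a \<oplus>\<^bsub>X\<^esub> c"
    using ds unfolding direct_summand_def by blast
  have CX: "C \<subseteq> carrier X" using submodD(1)[OF C] .
  have inj: "inj_on f C"
  proof (rule inj_onI)
    fix c d assume cd: "c \<in> C" "d \<in> C" "f c = f d"
    then have "c \<ominus>\<^bsub>X\<^esub> d \<in> C"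
      using submodD(3,4)[OF C] by (simp add: a_minus_def)
    moreover have "f (c \<ominus>\<^bsub>X\<^esub> d) = \<zero>\<^bsub>Y\<^esub>"
      using cd CX rmod_hom_minus[OF fh X Y, of c d] rmod_hom_closed[OF fh, of d]
      by (simp add: subsetD Y.r_neg a_minus_def)
    ultimately have "c \<ominus>\<^bsub>X\<^esub> d = \<zero>\<^bsub>X\<^esub>"
      using disj cd CX by (auto simp: rmod_ker_def)
    then show "c = d"
      using cd CX X.minus_equality[of c "\<ominus>\<^bsub>X\<^esub> d"] X.minus_minus[of d]
      by (auto simp: a_minus_def subsetD)
  qed
  moreover have onto: "f ` C = carrier Y"
  proof
    show "f ` C \<subseteq> carrier Y" using CX rmod_hom_closed[OF fh] by blast
  next
    show "carrier Y \<subseteq> f ` C"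
    proof
      fix y assume "y \<in> carrier Y"
      then obtain x where x: "x \<in> carrier X" "y = f x" using onto_Y by blast
      then obtain a c where ac: "a \<in> rmod_ker X Y f" "c \<in> C" "x = a \<oplus>\<^bsub>X\<^esub> c" using span by blast
      then have "y = f c"
        using x CX rmod_hom_add[OF fh] rmod_hom_closed[OF fh] by (auto simp: rmod_ker_def subsetD)
      then show "y \<in> f ` C" using ac(2) by blast
    qed
  qed
  ultimately show ?thesis
    using rmod_hom_the_inv_into[OF fh X C] f_the_inv_into_f[OF inj] by (intro bexI) auto
qed

lemma direct_summand_kernel_if_section:
  assumes X: "right_module R X" and Y: "right_module R Y" and f: "f \<in> rmod_hom R X Y"
    and s: "s \<in> rmod_hom R (subm Y (f ` carrier X)) X"
    and s_right_inv: "\<And>y. y \<in> f ` carrier X \<Longrightarrow> f (s y) = y"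
  shows "direct_summand R (rmod_ker X Y f) X"
proof -
  interpret X: abelian_group X using X by (rule rmod_abelian_group)
  interpret Y: abelian_group Y using Y by (rule rmod_abelian_group)
  let ?I = "f ` carrier X"
  have I: "submod R ?I Y" using submod_image[OF f X Y] .
  have IY: "right_module R (subm Y ?I)" using submod_right_module[OF Y I] .
  have C: "submod R (s ` ?I) X" using submod_image[OF s IY X] by simp
  have s0: "s \<zero>\<^bsub>Y\<^esub> = \<zero>\<^bsub>X\<^esub>" using rmod_hom_zero[OF s IY X] by simp
  have sX: "s y \<in> carrier X" if "y \<in> ?I" for y using rmod_hom_closed[OF s] that by simp
  have "rmod_ker X Y f \<inter> s ` ?I = {\<zero>\<^bsub>X\<^esub>}"
  proof
    show "rmod_ker X Y f \<inter> s ` ?I \<subseteq> {\<zero>\<^bsub>X\<^esub>}"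
      using s_right_inv s0 by (force simp: rmod_ker_def)
    show "{\<zero>\<^bsub>X\<^esub>} \<subseteq> rmod_ker X Y f \<inter> s ` ?I"
      using s0 submodD(2)[OF I] rmod_hom_zero[OF f X Y] by (force simp: rmod_ker_def)
  qed
  moreover have "\<exists>a\<in>rmod_ker X Y f. \<exists>c\<in>s ` ?I. x = a \<oplus>\<^bsub>X\<^esub> c" if x: "x \<in> carrier X" for x
  proof (intro bexI)
    have fx: "f x \<in> ?I" using x by blast
    show "x = (x \<ominus>\<^bsub>X\<^esub> s (f x)) \<oplus>\<^bsub>X\<^esub> s (f x)"
      using x sX[OF fx] by (simp add: a_minus_def X.a_assoc X.l_neg)
    show "x \<ominus>\<^bsub>X\<^esub> s (f x) \<in> rmod_ker X Y f"
      using x sX[OF fx] s_right_inv[OF fx] rmod_hom_minus[OF f X Y] rmod_hom_closed[OF f]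
      by (simp add: rmod_ker_def Y.r_neg a_minus_def)
    show "s (f x) \<in> s ` ?I" using fx by blast
  qed
  ultimately show ?thesis
    unfolding direct_summand_def using submod_kernel[OF f X Y] C by blast
qed

section \<open>Module structures induced by surjections\<close>

lemma abelian_group_surj_image:
  assumes K: "abelian_group K" and onto: "q ` carrier K = carrier Q"
    and add: "\<And>a b. a \<in> carrier K \<Longrightarrow> b \<in> carrier K \<Longrightarrow> q (a \<oplus>\<^bsub>K\<^esub> b) = q a \<oplus>\<^bsub>Q\<^esub> q b"
    and zero: "\<zero>\<^bsub>Q\<^esub> = q \<zero>\<^bsub>K\<^esub>"
  shows "abelian_group Q"
proof -
  interpret K: abelian_group K by fact
  have q: "q a \<in> carrier Q" if "a \<in> carrier K" for a
    using onto that by auto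
  have pre: "\<exists>a\<in>carrier K. x = q a" if "x \<in> carrier Q" for x
    using onto that by auto
  show ?thesis
  proof (rule abelian_groupI)
    fix x y assume "x \<in> carrier Q" "y \<in> carrier Q"
    with pre obtain a b where "a \<in> carrier K" "b \<in> carrier K" "x = q a" "y = q b" by meson
    then show "x \<oplus>\<^bsub>Q\<^esub> y \<in> carrier Q" by (simp flip: add add: q)
  next
    show "\<zero>\<^bsub>Q\<^esub> \<in> carrier Q" using zero q by simp
  next
    fix x y z assume "x \<in> carrier Q" "y \<in> carrier Q" "z \<in> carrier Q"
    with pre obtain a b c where "a \<in> carrier K" "b \<in> carrier K" "c \<in> carrier K"
      "x = q a" "y = q b" "z = q c" by meson
    then show "x \<oplus>\<^bsub>Q\<^esub> y \<oplus>\<^bsub>Q\<^esub> z = x \<oplus>\<^bsub>Q\<^esub> (y \<oplus>\<^bsub>Q\<^esub> z)" by (simp flip: add add: K.a_assoc)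
  next
    fix x y assume "x \<in> carrier Q" "y \<in> carrier Q"
    with pre obtain a b where "a \<in> carrier K" "b \<in> carrier K" "x = q a" "y = q b" by meson
    then show "x \<oplus>\<^bsub>Q\<^esub> y = y \<oplus>\<^bsub>Q\<^esub> x" by (simp flip: add add: K.a_comm)
  next
    fix x assume "x \<in> carrier Q"
    with pre obtain a where "a \<in> carrier K" "x = q a" by meson
    then show "\<zero>\<^bsub>Q\<^esub> \<oplus>\<^bsub>Q\<^esub> x = x" by (simp add: zero flip: add)
  next
    fix x assume "x \<in> carrier Q"
    with pre obtain a where a: "a \<in> carrier K" "x = q a" by meson
    then have "q (\<ominus>\<^bsub>K\<^esub> a) \<oplus>\<^bsub>Q\<^esub> x = \<zero>\<^bsub>Q\<^esub>" by (simp add: zero K.l_neg flip: add)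
    then show "\<exists>y\<in>carrier Q. y \<oplus>\<^bsub>Q\<^esub> x = \<zero>\<^bsub>Q\<^esub>" using q a(1) by blast
  qed
qed

lemma right_module_surj_image:
  assumes K: "right_module R K" and onto: "q ` carrier K = carrier Q"
    and add: "\<And>a b. a \<in> carrier K \<Longrightarrow> b \<in> carrier K \<Longrightarrow> q (a \<oplus>\<^bsub>K\<^esub> b) = q a \<oplus>\<^bsub>Q\<^esub> q b"
    and smult: "\<And>a r. a \<in> carrier K \<Longrightarrow> r \<in> carrier R \<Longrightarrow> q (a \<odot>\<^bsub>K\<^esub> r) = q a \<odot>\<^bsub>Q\<^esub> r"
    and zero: "\<zero>\<^bsub>Q\<^esub> = q \<zero>\<^bsub>K\<^esub>"
  shows "right_module R Q"
proof -
  interpret K: abelian_group K using K by (rule rmod_abelian_group)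
  interpret R: ring R using K by (rule rmod_ring)
  have q: "q a \<in> carrier Q" if "a \<in> carrier K" for a
    using onto that by auto
  have pre: "\<exists>a\<in>carrier K. x = q a" if "x \<in> carrier Q" for x
    using onto that by auto
  note K_simps = rmod_smult_closed[OF K] rmod_smult_l_distr[OF K] rmod_smult_r_distr[OF K]
    rmod_smult_assoc[OF K] rmod_smult_one[OF K]
  show ?thesis
    unfolding right_module_def
  proof (intro conjI ballI)
    show "ring R" by (fact R.ring_axioms)
    show "abelian_group Q"
      using abelian_group_surj_image[OF K.abelian_group_axioms onto add zero] .
  next
    fix x r assume "x \<in> carrier Q" "r \<in> carrier R"
    moreover from \<open>x \<in> carrier Q\<close> pre obtain a where "a \<in> carrier K" "x = q a" by meson
    ultimately show "x \<odot>\<^bsub>Q\<^esub> r \<in> carrier Q" by (simp add: q K_simps flip: smult)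
  next
    fix x y r assume "x \<in> carrier Q" "y \<in> carrier Q" "r \<in> carrier R"
    moreover from \<open>x \<in> carrier Q\<close> \<open>y \<in> carrier Q\<close> pre obtain a b
      where "a \<in> carrier K" "b \<in> carrier K" "x = q a" "y = q b" by meson
    ultimately show "(x \<oplus>\<^bsub>Q\<^esub> y) \<odot>\<^bsub>Q\<^esub> r = x \<odot>\<^bsub>Q\<^esub> r \<oplus>\<^bsub>Q\<^esub> y \<odot>\<^bsub>Q\<^esub> r"
      by (simp add: K_simps flip: add smult)
  next
    fix x r s assume "x \<in> carrier Q" "r \<in> carrier R" "s \<in> carrier R"
    moreover from \<open>x \<in> carrier Q\<close> pre obtain a where "a \<in> carrier K" "x = q a" by meson
    ultimately show "x \<odot>\<^bsub>Q\<^esub> (r \<oplus>\<^bsub>R\<^esub> s) = x \<odot>\<^bsub>Q\<^esub> r \<oplus>\<^bsub>Q\<^esub> x \<odot>\<^bsub>Q\<^esub> s"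
      by (simp add: K_simps flip: add smult)
  next
    fix x r s assume "x \<in> carrier Q" "r \<in> carrier R" "s \<in> carrier R"
    moreover from \<open>x \<in> carrier Q\<close> pre obtain a where "a \<in> carrier K" "x = q a" by meson
    ultimately show "x \<odot>\<^bsub>Q\<^esub> (r \<otimes>\<^bsub>R\<^esub> s) = x \<odot>\<^bsub>Q\<^esub> r \<odot>\<^bsub>Q\<^esub> s"
      by (simp add: K_simps flip: smult)
  next
    fix x assume "x \<in> carrier Q"
    with pre obtain a where "a \<in> carrier K" "x = q a" by meson
    then show "x \<odot>\<^bsub>Q\<^esub> \<one>\<^bsub>R\<^esub> = x" by (simp add: K_simps flip: smult)
  qed
qed

definition rmod_transport :: "('k, 'r, 'd) rmodule_scheme \<Rightarrow> ('k \<Rightarrow> 'x) \<Rightarrow> ('x, 'r) rmodule" where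
  "rmod_transport K e = \<lparr>carrier = e ` carrier K, mult = (\<lambda>a b. undefined), one = undefined,
     zero = e \<zero>\<^bsub>K\<^esub>,
     add = (\<lambda>a b. e (inv_into (carrier K) e a \<oplus>\<^bsub>K\<^esub> inv_into (carrier K) e b)),
     rsmult = (\<lambda>a r. e (inv_into (carrier K) e a \<odot>\<^bsub>K\<^esub> r))\<rparr>"

lemma rmod_transport_hom:
  assumes K: "right_module R K" and e: "inj_on e (carrier K)"
  shows "e \<in> rmod_hom R K (rmod_transport K e)"
proof -
  interpret K: abelian_group K using K by (rule rmod_abelian_group)
  show ?thesis by (rule rmod_homI) (auto simp: rmod_transport_def e inv_into_f_f)
qed

lemma rmod_transport_right_module:
  assumes K: "right_module R K" and e: "inj_on e (carrier K)"
  shows "right_module R (rmod_transport K e)"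
  by (rule right_module_surj_image[OF K, of e])
    (auto simp: rmod_transport_def e inv_into_f_f)

definition rmod_coset :: "('k, 'r, 'd) rmodule_scheme \<Rightarrow> 'k set \<Rightarrow> 'k \<Rightarrow> 'k set" where
  "rmod_coset K U k = {x \<in> carrier K. x \<ominus>\<^bsub>K\<^esub> k \<in> U}"

definition rmod_quotient :: "('k, 'r, 'd) rmodule_scheme \<Rightarrow> 'k set \<Rightarrow> ('k set, 'r) rmodule" where
  "rmod_quotient K U = \<lparr>carrier = rmod_coset K U ` carrier K, mult = (\<lambda>C D. undefined),
     one = undefined, zero = rmod_coset K U \<zero>\<^bsub>K\<^esub>,
     add = (\<lambda>C D. rmod_coset K U ((SOME x. x \<in> C) \<oplus>\<^bsub>K\<^esub> (SOME x. x \<in> D))),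
     rsmult = (\<lambda>C r. rmod_coset K U ((SOME x. x \<in> C) \<odot>\<^bsub>K\<^esub> r))\<rparr>"

context
  fixes R :: "('r, 'c) ring_scheme" and K :: "('k, 'r, 'd) rmodule_scheme" and U :: "'k set"
  assumes K: "right_module R K" and U: "submod R U K"
begin

interpretation K: abelian_group K using K by (rule rmod_abelian_group)

lemma rmod_coset_eq_iff:
  assumes a: "a \<in> carrier K" and b: "b \<in> carrier K"
  shows "rmod_coset K U a = rmod_coset K U b \<longleftrightarrow> a \<ominus>\<^bsub>K\<^esub> b \<in> U"
proof
  assume "rmod_coset K U a = rmod_coset K U b"
  moreover have "a \<in> rmod_coset K U a"
    using a submodD(2)[OF U] by (simp add: rmod_coset_def K.r_neg a_minus_def)
  ultimately show "a \<ominus>\<^bsub>K\<^esub> b \<in> U" by (simp add: rmod_coset_def)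
next
  assume ab: "a \<ominus>\<^bsub>K\<^esub> b \<in> U"
  then have ba: "b \<ominus>\<^bsub>K\<^esub> a \<in> U" using submodD(4)[OF U] K.a_minus_swap[OF a b] by simp
  show "rmod_coset K U a = rmod_coset K U b"
    unfolding rmod_coset_def
    using submodD(3)[OF U] ab ba K.a_minus_chain[OF _ a b] K.a_minus_chain[OF _ b a] by metis
qed

lemma rmod_coset_some:
  assumes a: "a \<in> carrier K"
  shows "(SOME x. x \<in> rmod_coset K U a) \<in> carrier K"
    and "a \<ominus>\<^bsub>K\<^esub> (SOME x. x \<in> rmod_coset K U a) \<in> U"
proof -
  have "a \<in> rmod_coset K U a"
    using a submodD(2)[OF U] by (simp add: rmod_coset_def K.r_neg a_minus_def)
  then have some: "(SOME x. x \<in> rmod_coset K U a) \<in> rmod_coset K U a" by (rule someI)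
  then show c: "(SOME x. x \<in> rmod_coset K U a) \<in> carrier K" by (simp add: rmod_coset_def)
  show "a \<ominus>\<^bsub>K\<^esub> (SOME x. x \<in> rmod_coset K U a) \<in> U"
    using some submodD(4)[OF U] K.a_minus_swap[OF c a] by (simp add: rmod_coset_def)
qed

lemma rmod_coset_add:
  assumes a: "a \<in> carrier K" and b: "b \<in> carrier K"
  shows "rmod_coset K U (a \<oplus>\<^bsub>K\<^esub> b) = rmod_coset K U a \<oplus>\<^bsub>rmod_quotient K U\<^esub> rmod_coset K U b"
proof -
  let ?a = "SOME x. x \<in> rmod_coset K U a" and ?b = "SOME x. x \<in> rmod_coset K U b"
  have c: "?a \<in> carrier K" "?b \<in> carrier K" using rmod_coset_some(1) a b by auto
  have "(a \<oplus>\<^bsub>K\<^esub> b) \<ominus>\<^bsub>K\<^esub> (?a \<oplus>\<^bsub>K\<^esub> ?b) = (a \<ominus>\<^bsub>K\<^esub> ?a) \<oplus>\<^bsub>K\<^esub> (b \<ominus>\<^bsub>K\<^esub> ?b)"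
    using a b c by (simp add: a_minus_def K.minus_add K.a_ac)
  then have "(a \<oplus>\<^bsub>K\<^esub> b) \<ominus>\<^bsub>K\<^esub> (?a \<oplus>\<^bsub>K\<^esub> ?b) \<in> U"
    using submodD(3)[OF U] rmod_coset_some(2) a b by simp
  then show ?thesis
    using rmod_coset_eq_iff a b c by (simp add: rmod_quotient_def)
qed

lemma rmod_coset_smult:
  assumes a: "a \<in> carrier K" and r: "r \<in> carrier R"
  shows "rmod_coset K U (a \<odot>\<^bsub>K\<^esub> r) = rmod_coset K U a \<odot>\<^bsub>rmod_quotient K U\<^esub> r"
proof -
  let ?a = "SOME x. x \<in> rmod_coset K U a"
  have c: "?a \<in> carrier K" using rmod_coset_some(1) a by auto
  have "(a \<odot>\<^bsub>K\<^esub> r) \<ominus>\<^bsub>K\<^esub> (?a \<odot>\<^bsub>K\<^esub> r) \<in> U"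
    using rmod_minus_smult[OF K a c r] submodD(5)[OF U rmod_coset_some(2)[OF a] r] by simp
  then show ?thesis
    using rmod_coset_eq_iff a c r rmod_smult_closed[OF K] by (simp add: rmod_quotient_def)
qed

lemma rmod_quotient_right_module: "right_module R (rmod_quotient K U)"
  by (rule right_module_surj_image[OF K, of "rmod_coset K U"])
    (auto simp: rmod_coset_add rmod_coset_smult, auto simp: rmod_quotient_def)

lemma rmod_coset_epi: "rmod_coset K U \<in> rmod_epi R K (rmod_quotient K U)"
  unfolding rmod_epi_def
  by (auto intro!: rmod_homI simp: rmod_coset_add rmod_coset_smult) (auto simp: rmod_quotient_def)

end

section \<open>The finite direct sums \<open>M\<^sup>(\<^sup>n\<^sup>)\<close>\<close>

lemma dsum_pow_carrier:
  "v \<in> carrier (dsum_pow M n) \<longleftrightarrow> (\<forall>i<n. v i \<in> carrier M) \<and> (\<forall>i\<ge>n. v i = \<zero>\<^bsub>M\<^esub>)"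
  by (simp add: dsum_pow_def)

lemma dsum_pow_add [simp]: "v \<oplus>\<^bsub>dsum_pow M n\<^esub> w = (\<lambda>i. v i \<oplus>\<^bsub>M\<^esub> w i)"
  by (simp add: dsum_pow_def)

lemma dsum_pow_zero [simp]: "\<zero>\<^bsub>dsum_pow M n\<^esub> = (\<lambda>i. \<zero>\<^bsub>M\<^esub>)"
  by (simp add: dsum_pow_def)

lemma dsum_pow_smult [simp]:
  "v \<odot>\<^bsub>dsum_pow M n\<^esub> r = (\<lambda>i. if i < n then v i \<odot>\<^bsub>M\<^esub> r else \<zero>\<^bsub>M\<^esub>)"
  by (simp add: dsum_pow_def)

lemma dsum_pow_0_carrier: "carrier (dsum_pow M 0) = {\<zero>\<^bsub>dsum_pow M 0\<^esub>}"
  by (auto simp: dsum_pow_carrier)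

lemma dsum_pow_closed:
  assumes M: "right_module R M" and v: "v \<in> carrier (dsum_pow M n)"
  shows "v i \<in> carrier M"
proof -
  interpret abelian_group M using M by (rule rmod_abelian_group)
  show ?thesis using v by (cases "i < n") (auto simp: dsum_pow_carrier)
qed

lemma dsum_pow_right_module:
  assumes M: "right_module R M"
  shows "right_module R (dsum_pow M n)"
proof -
  interpret abelian_group M using M by (rule rmod_abelian_group)
  let ?P = "dsum_pow M n"
  note closed = dsum_pow_closed[OF M]
  have minus_zero: "\<ominus>\<^bsub>M\<^esub> \<zero>\<^bsub>M\<^esub> = \<zero>\<^bsub>M\<^esub>" by (simp add: minus_equality)
  have "abelian_group ?P"
  proof (rule abelian_groupI)
    fix x assume x: "x \<in> carrier ?P"
    then have "(\<lambda>i. \<ominus>\<^bsub>M\<^esub> x i) \<in> carrier ?P" "(\<lambda>i. \<ominus>\<^bsub>M\<^esub> x i) \<oplus>\<^bsub>?P\<^esub> x = \<zero>\<^bsub>?P\<^esub>"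
      by (auto simp: dsum_pow_carrier minus_zero l_neg closed fun_eq_iff)
    then show "\<exists>y\<in>carrier ?P. y \<oplus>\<^bsub>?P\<^esub> x = \<zero>\<^bsub>?P\<^esub>" by blast
  qed (auto simp: dsum_pow_carrier a_ac closed fun_eq_iff)
  then show ?thesis
    unfolding right_module_def
    using M by (auto simp: dsum_pow_carrier rmod_ring rmod_smult_closed rmod_smult_l_distr
        rmod_smult_r_distr rmod_smult_assoc rmod_smult_one fun_eq_iff)
qed

lemma dsum_pow_carrier_mono:
  assumes M: "right_module R M" and "m \<le> k"
  shows "carrier (dsum_pow M m) \<subseteq> carrier (dsum_pow M k)"
  using assms(2) dsum_pow_closed[OF M] by (auto simp: dsum_pow_carrier)

lemma dsum_pow_incl_hom:
  assumes M: "right_module R M" and mk: "m \<le> k"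
  shows "(\<lambda>v. v) \<in> rmod_hom R (dsum_pow M m) (dsum_pow M k)"
proof (rule rmod_homI)
  fix x r assume "x \<in> carrier (dsum_pow M m)" "r \<in> carrier R"
  then show "x \<odot>\<^bsub>dsum_pow M m\<^esub> r = x \<odot>\<^bsub>dsum_pow M k\<^esub> r"
    using mk by (auto simp: dsum_pow_carrier rmod_zero_smult[OF M] fun_eq_iff)
qed (use dsum_pow_carrier_mono[OF assms] in auto)

definition dsum_trunc :: "('a, 'r, 'd) rmodule_scheme \<Rightarrow> nat \<Rightarrow> (nat \<Rightarrow> 'a) \<Rightarrow> nat \<Rightarrow> 'a" where
  "dsum_trunc M m v = (\<lambda>i. if i < m then v i else \<zero>\<^bsub>M\<^esub>)"

definition dsum_unit :: "('a, 'r, 'd) rmodule_scheme \<Rightarrow> nat \<Rightarrow> 'a \<Rightarrow> nat \<Rightarrow> 'a" where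
  "dsum_unit M k x = (\<lambda>i. if i = k then x else \<zero>\<^bsub>M\<^esub>)"

lemma dsum_trunc_id: "v \<in> carrier (dsum_pow M m) \<Longrightarrow> dsum_trunc M m v = v"
  by (auto simp: dsum_pow_carrier dsum_trunc_def)

lemma dsum_trunc_hom:
  assumes M: "right_module R M"
  shows "dsum_trunc M m \<in> rmod_hom R (dsum_pow M k) (dsum_pow M m)"
proof -
  interpret abelian_group M using M by (rule rmod_abelian_group)
  show ?thesis
    by (intro rmod_homI)
      (auto simp: dsum_pow_carrier dsum_trunc_def rmod_zero_smult[OF M] dsum_pow_closed[OF M] fun_eq_iff)
qed

lemma dsum_trunc_epi:
  assumes M: "right_module R M" and mk: "m \<le> k"
  shows "dsum_trunc M m \<in> rmod_epi R (dsum_pow M k) (dsum_pow M m)"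
proof -
  have "dsum_trunc M m ` carrier (dsum_pow M k) \<subseteq> carrier (dsum_pow M m)"
    using rmod_hom_closed[OF dsum_trunc_hom[OF M]] by (rule image_subsetI)
  moreover have "v \<in> dsum_trunc M m ` carrier (dsum_pow M k)" if "v \<in> carrier (dsum_pow M m)" for v
    using that dsum_pow_carrier_mono[OF M mk] dsum_trunc_id[OF that] by (intro rev_image_eqI) auto
  ultimately show ?thesis
    using dsum_trunc_hom[OF M] unfolding rmod_epi_def by blast
qed

lemma dsum_proj_hom: "i < k \<Longrightarrow> (\<lambda>v. v i) \<in> rmod_hom R (dsum_pow M k) M"
  by (intro rmod_homI) (auto simp: dsum_pow_carrier)

lemma dsum_unit_hom:
  assumes M: "right_module R M" and "i < k"
  shows "dsum_unit M i \<in> rmod_hom R M (dsum_pow M k)"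
proof -
  interpret abelian_group M using M by (rule rmod_abelian_group)
  show ?thesis
    using assms(2)
    by (intro rmod_homI) (auto simp: dsum_pow_carrier dsum_unit_def rmod_zero_smult[OF M] fun_eq_iff)
qed

lemma dsum_unit_proj [simp]: "dsum_unit M i x i = x"
  by (simp add: dsum_unit_def)

lemma dsum_pow_Suc_decomp:
  assumes M: "right_module R M" and v: "v \<in> carrier (dsum_pow M (Suc m))"
  shows "dsum_trunc M m v \<oplus>\<^bsub>dsum_pow M (Suc m)\<^esub> dsum_unit M m (v m) = v"
proof -
  interpret abelian_group M using M by (rule rmod_abelian_group)
  show ?thesis using v by (auto simp: dsum_pow_carrier dsum_trunc_def dsum_unit_def fun_eq_iff)
qed

lemma dsum_proj_epi:
  assumes M: "right_module R M" and "i < k"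
  shows "(\<lambda>v. v i) \<in> rmod_epi R (dsum_pow M k) M"
proof -
  have "x \<in> (\<lambda>v. v i) ` carrier (dsum_pow M k)" if "x \<in> carrier M" for x
    using rmod_hom_closed[OF dsum_unit_hom[OF assms] that] by (auto intro: rev_image_eqI)
  then show ?thesis
    using dsum_proj_hom[OF assms(2)] rmod_hom_closed unfolding rmod_epi_def by fastforce
qed

section \<open>Relative projectivity\<close>

text \<open>Relative projectivity only quantifies over targets whose elements have the type of those
  of the module projected onto.  Transporting an arbitrary target along a choice of preimages
  removes this restriction.\<close>

lemma rel_projectiveD:
  fixes X :: "('x, 'r, 'd) rmodule_scheme" and K :: "('k, 'r, 'e) rmodule_scheme"
  assumes P: "rel_projective R N X" and K: "right_module R K"
    and g: "g \<in> rmod_epi R X K" and f: "f \<in> rmod_hom R N K"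
  shows "\<exists>h\<in>rmod_hom R N X. \<forall>x\<in>carrier N. g (h x) = f x"
proof -
  have gh: "g \<in> rmod_hom R X K" and onto: "g ` carrier X = carrier K"
    using g by (auto simp: rmod_epi_def)
  define e where "e = inv_into (carrier X) g"
  have inj: "inj_on e (carrier K)"
    using onto by (simp add: e_def inj_on_inv_into)
  let ?K = "rmod_transport K e"
  have eh: "e \<in> rmod_hom R K ?K" using rmod_transport_hom[OF K inj] .
  have "(\<lambda>x. e (g x)) \<in> rmod_epi R X ?K"
    using rmod_hom_comp[OF gh eh] onto
    by (auto simp: rmod_epi_def rmod_transport_def image_image[symmetric])
  then obtain h where h: "h \<in> rmod_hom R N X" and lift: "\<forall>x\<in>carrier N. e (g (h x)) = e (f x)"
    using P rmod_transport_right_module[OF K inj] rmod_hom_comp[OF f eh]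
    unfolding rel_projective_def by blast
  have "g (h x) = f x" if "x \<in> carrier N" for x
    using inj_onD[OF inj lift[rule_format, OF that]] that
      rmod_hom_closed[OF gh rmod_hom_closed[OF h]] rmod_hom_closed[OF f] by blast
  with h show ?thesis by blast
qed

lemma rel_projective_retract:
  fixes R :: "('r, 'c) ring_scheme" and M :: "('a, 'r, 'd) rmodule_scheme"
  assumes XP: "rel_projective R X M" and p: "p \<in> rmod_hom R X Y" and s: "s \<in> rmod_hom R Y X"
    and ps: "\<And>y. y \<in> carrier Y \<Longrightarrow> p (s y) = y"
  shows "rel_projective R Y M"
  unfolding rel_projective_def
proof (intro allI impI, elim conjE)
  fix K :: "('a, 'r) rmodule" and g f
  assume K: "right_module R K" and g: "g \<in> rmod_epi R M K" and f: "f \<in> rmod_hom R Y K"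
  obtain h where h: "h \<in> rmod_hom R X M" and lift: "\<forall>x\<in>carrier X. g (h x) = f (p x)"
    using rel_projectiveD[OF XP K g rmod_hom_comp[OF p f]] by blast
  have "\<forall>y\<in>carrier Y. g (h (s y)) = f y"
    using lift ps rmod_hom_closed[OF s] by simp
  then show "\<exists>h\<in>rmod_hom R Y M. \<forall>y\<in>carrier Y. g (h y) = f y"
    using rmod_hom_comp[OF s h] by (intro bexI[where x = "\<lambda>y. h (s y)"])
qed

lemma rel_projective_epi_image:
  fixes R :: "('r, 'c) ring_scheme" and Z :: "('a, 'r, 'd) rmodule_scheme"
  assumes YX: "rel_projective R Y X" and q: "q \<in> rmod_epi R X Z"
  shows "rel_projective R Y Z"
  unfolding rel_projective_def
proof (intro allI impI, elim conjE)
  fix K :: "('a, 'r) rmodule" and g f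
  assume K: "right_module R K" and g: "g \<in> rmod_epi R Z K" and f: "f \<in> rmod_hom R Y K"
  obtain h where h: "h \<in> rmod_hom R Y X" and lift: "\<forall>y\<in>carrier Y. g (q (h y)) = f y"
    using rel_projectiveD[OF YX K rmod_epi_comp[OF q g] f] by blast
  have "q \<in> rmod_hom R X Z" using q by (simp add: rmod_epi_def)
  then show "\<exists>h\<in>rmod_hom R Y Z. \<forall>y\<in>carrier Y. g (h y) = f y"
    using rmod_hom_comp[OF h] lift by (intro bexI[where x = "\<lambda>y. q (h y)"])
qed

lemma rel_projective_zero_module:
  fixes R :: "('r, 'c) ring_scheme" and M :: "('a, 'r, 'd) rmodule_scheme"
  assumes Y: "right_module R Y" and M: "right_module R M" and Y0: "carrier Y = {\<zero>\<^bsub>Y\<^esub>}"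
  shows "rel_projective R Y M"
  unfolding rel_projective_def
proof (intro allI impI, elim conjE)
  fix K :: "('a, 'r) rmodule" and g f
  assume K: "right_module R K" and g: "g \<in> rmod_epi R M K" and f: "f \<in> rmod_hom R Y K"
  interpret M: abelian_group M using M by (rule rmod_abelian_group)
  have "g \<zero>\<^bsub>M\<^esub> = f \<zero>\<^bsub>Y\<^esub>"
    using g rmod_hom_zero[OF _ M K] rmod_hom_zero[OF f Y K] by (simp add: rmod_epi_def)
  moreover have "(\<lambda>y. \<zero>\<^bsub>M\<^esub>) \<in> rmod_hom R Y M"
    by (rule rmod_homI) (auto simp: rmod_zero_smult[OF M])
  ultimately show "\<exists>h\<in>rmod_hom R Y M. \<forall>y\<in>carrier Y. g (h y) = f y"
    using Y0 by auto
qed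

lemma rel_projective_over_zero_module:
  fixes R :: "('r, 'c) ring_scheme" and X :: "('a, 'r, 'd) rmodule_scheme"
  assumes X: "right_module R X" and X0: "carrier X = {\<zero>\<^bsub>X\<^esub>}"
  shows "rel_projective R Y X"
  unfolding rel_projective_def
proof (intro allI impI, elim conjE)
  fix K :: "('a, 'r) rmodule" and g f
  assume g: "g \<in> rmod_epi R X K" and f: "f \<in> rmod_hom R Y K"
  interpret X: abelian_group X using X by (rule rmod_abelian_group)
  have "carrier K = {g \<zero>\<^bsub>X\<^esub>}" using g X0 by (simp add: rmod_epi_def)
  then have "\<forall>y\<in>carrier Y. g \<zero>\<^bsub>X\<^esub> = f y" using rmod_hom_closed[OF f] by force
  moreover have "(\<lambda>y. \<zero>\<^bsub>X\<^esub>) \<in> rmod_hom R Y X"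
    by (rule rmod_homI) (auto simp: rmod_zero_smult[OF X])
  ultimately show "\<exists>h\<in>rmod_hom R Y X. \<forall>y\<in>carrier Y. g (h y) = f y" by auto
qed

lemma rel_projective_direct_sum:
  fixes R :: "('r, 'c) ring_scheme" and M :: "('a, 'r, 'd) rmodule_scheme"
  assumes M: "right_module R M"
    and AP: "rel_projective R A M" and BP: "rel_projective R B M"
    and p: "p \<in> rmod_hom R X A" and q: "q \<in> rmod_hom R X B"
    and i: "i \<in> rmod_hom R A X" and j: "j \<in> rmod_hom R B X"
    and decomp: "\<And>x. x \<in> carrier X \<Longrightarrow> i (p x) \<oplus>\<^bsub>X\<^esub> j (q x) = x"
  shows "rel_projective R X M"
  unfolding rel_projective_def
proof (intro allI impI, elim conjE)
  fix K :: "('a, 'r) rmodule" and g f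
  assume K: "right_module R K" and g: "g \<in> rmod_epi R M K" and f: "f \<in> rmod_hom R X K"
  have gh: "g \<in> rmod_hom R M K" using g by (simp add: rmod_epi_def)
  obtain hA where hA: "hA \<in> rmod_hom R A M" "\<forall>a\<in>carrier A. g (hA a) = f (i a)"
    using rel_projectiveD[OF AP K g rmod_hom_comp[OF i f]] by blast
  obtain hB where hB: "hB \<in> rmod_hom R B M" "\<forall>b\<in>carrier B. g (hB b) = f (j b)"
    using rel_projectiveD[OF BP K g rmod_hom_comp[OF j f]] by blast
  let ?h = "\<lambda>x. hA (p x) \<oplus>\<^bsub>M\<^esub> hB (q x)"
  have "\<forall>x\<in>carrier X. g (?h x) = f x"
  proof
    fix x assume x: "x \<in> carrier X"
    have pq: "p x \<in> carrier A" "q x \<in> carrier B"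
      using x rmod_hom_closed[OF p] rmod_hom_closed[OF q] by auto
    have "g (?h x) = f (i (p x)) \<oplus>\<^bsub>K\<^esub> f (j (q x))"
      using rmod_hom_add[OF gh] rmod_hom_closed[OF hA(1)] rmod_hom_closed[OF hB(1)] hA(2) hB(2) pq
      by simp
    also have "\<dots> = f x"
      using rmod_hom_add[OF f, symmetric] rmod_hom_closed[OF i] rmod_hom_closed[OF j] decomp[OF x] pq
      by simp
    finally show "g (?h x) = f x" .
  qed
  moreover have "?h \<in> rmod_hom R X M"
    using rmod_hom_plus[OF rmod_hom_comp[OF p hA(1)] rmod_hom_comp[OF q hB(1)] M] .
  ultimately show "\<exists>h\<in>rmod_hom R X M. \<forall>x\<in>carrier X. g (h x) = f x" by (rule bexI)
qed

text \<open>Lifting modulo a submodule \<open>U\<close> means lifting into the quotient \<open>K/U\<close>.\<close>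

lemma rel_projective_lift_modulo:
  fixes R :: "('r, 'c) ring_scheme" and K :: "('k, 'r, 'd) rmodule_scheme"
  assumes K: "right_module R K" and U: "submod R U K" and YA: "rel_projective R Y A"
    and \<phi>: "\<phi> \<in> rmod_hom R A K"
    and span: "\<And>k. k \<in> carrier K \<Longrightarrow> \<exists>a\<in>carrier A. k \<ominus>\<^bsub>K\<^esub> \<phi> a \<in> U"
    and f: "f \<in> rmod_hom R Y K"
  shows "\<exists>h\<in>rmod_hom R Y A. \<forall>y\<in>carrier Y. f y \<ominus>\<^bsub>K\<^esub> \<phi> (h y) \<in> U"
proof -
  let ?\<pi> = "rmod_coset K U" and ?Q = "rmod_quotient K U"
  have \<pi>: "?\<pi> \<in> rmod_hom R K ?Q" using rmod_coset_epi[OF K U] by (simp add: rmod_epi_def)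
  have "(\<lambda>a. ?\<pi> (\<phi> a)) ` carrier A = carrier ?Q"
  proof
    show "(\<lambda>a. ?\<pi> (\<phi> a)) ` carrier A \<subseteq> carrier ?Q"
      using rmod_hom_closed[OF rmod_hom_comp[OF \<phi> \<pi>]] by (rule image_subsetI)
  next
    show "carrier ?Q \<subseteq> (\<lambda>a. ?\<pi> (\<phi> a)) ` carrier A"
    proof
      fix C assume "C \<in> carrier ?Q"
      then obtain k where k: "k \<in> carrier K" "C = ?\<pi> k" by (auto simp: rmod_quotient_def)
      then obtain a where "a \<in> carrier A" "k \<ominus>\<^bsub>K\<^esub> \<phi> a \<in> U" using span by blast
      then show "C \<in> (\<lambda>a. ?\<pi> (\<phi> a)) ` carrier A"
        using k rmod_coset_eq_iff[OF K U] rmod_hom_closed[OF \<phi>] by (auto intro: rev_image_eqI)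
    qed
  qed
  then have "(\<lambda>a. ?\<pi> (\<phi> a)) \<in> rmod_epi R A ?Q"
    using rmod_hom_comp[OF \<phi> \<pi>] by (simp add: rmod_epi_def)
  then obtain h where h: "h \<in> rmod_hom R Y A" and lift: "\<forall>y\<in>carrier Y. ?\<pi> (\<phi> (h y)) = ?\<pi> (f y)"
    using rel_projectiveD[OF YA rmod_quotient_right_module[OF K U] _ rmod_hom_comp[OF f \<pi>]] by blast
  have "\<forall>y\<in>carrier Y. f y \<ominus>\<^bsub>K\<^esub> \<phi> (h y) \<in> U"
    using lift rmod_coset_eq_iff[OF K U] rmod_hom_closed[OF f] rmod_hom_closed[OF \<phi> rmod_hom_closed[OF h]]
    by metis
  with h show ?thesis by blast
qed

lemma rel_projective_lift_into_image:
  assumes K: "right_module R K" and B: "right_module R B" and YB: "rel_projective R Y B"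
    and \<psi>: "\<psi> \<in> rmod_hom R B K" and f: "f \<in> rmod_hom R Y K"
    and into: "\<And>y. y \<in> carrier Y \<Longrightarrow> f y \<in> \<psi> ` carrier B"
  shows "\<exists>h\<in>rmod_hom R Y B. \<forall>y\<in>carrier Y. \<psi> (h y) = f y"
proof -
  have "right_module R (subm K (\<psi> ` carrier B))"
    using submod_right_module[OF K submod_image[OF \<psi> B K]] .
  then show ?thesis
    using rel_projectiveD[OF YB _ rmod_epi_onto_image[OF \<psi>] rmod_hom_into_subm[OF f into]] by blast
qed

lemma rel_projective_over_sum:
  fixes R :: "('r, 'c) ring_scheme" and X :: "('a, 'r, 'd) rmodule_scheme"
  assumes X: "right_module R X" and B: "right_module R B"
    and YA: "rel_projective R Y A" and YB: "rel_projective R Y B"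
    and i: "i \<in> rmod_hom R A X" and j: "j \<in> rmod_hom R B X"
    and span: "\<And>x. x \<in> carrier X \<Longrightarrow> \<exists>a\<in>carrier A. \<exists>b\<in>carrier B. x = i a \<oplus>\<^bsub>X\<^esub> j b"
  shows "rel_projective R Y X"
  unfolding rel_projective_def
proof (intro allI impI, elim conjE)
  fix K :: "('a, 'r) rmodule" and g f
  assume K: "right_module R K" and g: "g \<in> rmod_epi R X K" and f: "f \<in> rmod_hom R Y K"
  interpret K: abelian_group K using K by (rule rmod_abelian_group)
  have gh: "g \<in> rmod_hom R X K" using g by (simp add: rmod_epi_def)
  have gi: "(\<lambda>a. g (i a)) \<in> rmod_hom R A K" and gj: "(\<lambda>b. g (j b)) \<in> rmod_hom R B K"
    using rmod_hom_comp[OF i gh] rmod_hom_comp[OF j gh] .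
  define U where "U = (\<lambda>b. g (j b)) ` carrier B"
  have U: "submod R U K" unfolding U_def using submod_image[OF gj B K] .
  have "\<exists>a\<in>carrier A. k \<ominus>\<^bsub>K\<^esub> g (i a) \<in> U" if k: "k \<in> carrier K" for k
  proof -
    obtain x where "x \<in> carrier X" "k = g x" using g k by (auto simp: rmod_epi_def)
    then obtain a b where ab: "a \<in> carrier A" "b \<in> carrier B" "k = g (i a) \<oplus>\<^bsub>K\<^esub> g (j b)"
      using span rmod_hom_add[OF gh] rmod_hom_closed[OF i] rmod_hom_closed[OF j] by metis
    then have "k \<ominus>\<^bsub>K\<^esub> g (i a) = g (j b)"
      using rmod_hom_closed[OF gi] rmod_hom_closed[OF gj]
      by (simp add: K.minus_add_cancel_left)
    then show ?thesis unfolding U_def using ab by blast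
  qed
  then obtain hA where hA: "hA \<in> rmod_hom R Y A"
    and modU: "\<forall>y\<in>carrier Y. f y \<ominus>\<^bsub>K\<^esub> g (i (hA y)) \<in> U"
    using rel_projective_lift_modulo[OF K U YA gi _ f] by blast
  let ?r = "\<lambda>y. f y \<ominus>\<^bsub>K\<^esub> g (i (hA y))"
  obtain hB where hB: "hB \<in> rmod_hom R Y B" and liftB: "\<forall>y\<in>carrier Y. g (j (hB y)) = ?r y"
    using rel_projective_lift_into_image[OF K B YB gj rmod_hom_diff[OF f rmod_hom_comp[OF hA gi] K]]
      modU unfolding U_def by blast
  let ?h = "\<lambda>y. i (hA y) \<oplus>\<^bsub>X\<^esub> j (hB y)"
  have "\<forall>y\<in>carrier Y. g (?h y) = f y"
  proof
    fix y assume y: "y \<in> carrier Y"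
    have "g (?h y) = g (i (hA y)) \<oplus>\<^bsub>K\<^esub> ?r y"
      using rmod_hom_add[OF gh] rmod_hom_closed[OF i] rmod_hom_closed[OF j] hA hB liftB y
      by (simp add: rmod_hom_closed)
    also have "\<dots> = f y"
      using rmod_hom_closed[OF f y] rmod_hom_closed[OF gi rmod_hom_closed[OF hA y]]
      by (simp add: K.add_minus_cancel_left)
    finally show "g (?h y) = f y" .
  qed
  moreover have "?h \<in> rmod_hom R Y X"
    using rmod_hom_plus[OF rmod_hom_comp[OF hA i] rmod_hom_comp[OF hB j] X] .
  ultimately show "\<exists>h\<in>rmod_hom R Y X. \<forall>y\<in>carrier Y. g (h y) = f y"
    by (intro bexI[where x = ?h])
qed

lemma rel_projective_dsum_pow:
  assumes Y: "right_module R Y" and M: "right_module R M" and YM: "rel_projective R Y M"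
  shows "rel_projective R (dsum_pow Y m) M"
proof (induction m)
  case 0
  show ?case
    using rel_projective_zero_module[OF dsum_pow_right_module[OF Y] M dsum_pow_0_carrier] .
next
  case (Suc m)
  show ?case
    by (rule rel_projective_direct_sum[OF M Suc.IH YM dsum_trunc_hom[OF Y] dsum_proj_hom[OF lessI]
          dsum_pow_incl_hom[OF Y le_SucI[OF order_refl]] dsum_unit_hom[OF Y lessI]])
      (rule dsum_pow_Suc_decomp[OF Y])
qed

lemma rel_projective_over_dsum_pow:
  assumes M: "right_module R M" and YM: "rel_projective R Y M"
  shows "rel_projective R Y (dsum_pow M m)"
proof (induction m)
  case 0
  show ?case
    using rel_projective_over_zero_module[OF dsum_pow_right_module[OF M] dsum_pow_0_carrier] .
next
  case (Suc m)
  have "\<exists>a\<in>carrier (dsum_pow M m). \<exists>b\<in>carrier M. v = a \<oplus>\<^bsub>dsum_pow M (Suc m)\<^esub> dsum_unit M m b"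
    if v: "v \<in> carrier (dsum_pow M (Suc m))" for v
    using dsum_pow_Suc_decomp[OF M v] rmod_hom_closed[OF dsum_trunc_hom[OF M] v] dsum_pow_closed[OF M v]
    by metis
  then show ?case
    using rel_projective_over_sum[OF dsum_pow_right_module[OF M] M Suc.IH YM
        dsum_pow_incl_hom[OF M le_SucI[OF order_refl]] dsum_unit_hom[OF M lessI]]
    by blast
qed

lemma quasi_projective_if_rel_projective_fin_gen:
  assumes M: "right_module R M" and YM: "rel_projective R Y M" and fg: "fin_gen_by R Y M"
  shows "quasi_projective R Y"
proof -
  obtain m q where "q \<in> rmod_epi R (dsum_pow M m) Y"
    using fg unfolding fin_gen_by_def by blast
  then show ?thesis
    unfolding quasi_projective_def
    using rel_projective_epi_image[OF rel_projective_over_dsum_pow[OF M YM]] by blast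
qed

lemma quasi_projective_if_dsum_pow_1:
  assumes M: "right_module R M" and QP: "quasi_projective R (dsum_pow M 1)"
  shows "quasi_projective R M"
proof -
  have "rel_projective R M (dsum_pow M 1)"
    using rel_projective_retract[OF QP[unfolded quasi_projective_def] dsum_proj_hom dsum_unit_hom[OF M]]
    by simp
  then show ?thesis
    unfolding quasi_projective_def using rel_projective_epi_image dsum_proj_epi[OF M] by blast
qed

section \<open>Finite \<open>\<Sigma>\<close>-Rickart modules\<close>

lemma rel_projective_fin_gen_submod:
  fixes R :: "('r, 'c) ring_scheme" and M :: "('a, 'r, 'd) rmodule_scheme"
  assumes M: "right_module R M" and QP: "quasi_projective R M" and FR: "fin_sigma_rickart R M"
    and N: "submod R N (dsum_pow M n)" and fg: "fin_gen_by R (subm (dsum_pow M n) N) M"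
  shows "rel_projective R (subm (dsum_pow M n) N) M"
proof -
  let ?Y = "subm (dsum_pow M n) N"
  obtain m q0 where m: "m > 0" and q0: "q0 \<in> rmod_epi R (dsum_pow M m) ?Y"
    using fg unfolding fin_gen_by_def by blast
  define k where "k = m + n"
  let ?P = "dsum_pow M k"
  have P: "right_module R ?P" using dsum_pow_right_module[OF M] .
  have q: "(\<lambda>v. q0 (dsum_trunc M m v)) \<in> rmod_epi R ?P ?Y"
    using rmod_epi_comp[OF dsum_trunc_epi[OF M] q0] by (simp add: k_def)
  then have qh: "(\<lambda>v. q0 (dsum_trunc M m v)) \<in> rmod_hom R ?P ?Y"
    by (simp add: rmod_epi_def)
  have "(\<lambda>v. q0 (dsum_trunc M m v)) \<in> rmod_hom R ?P ?P"
    using rmod_hom_comp[OF qh rmod_hom_comp[OF rmod_hom_subm_incl[OF N] dsum_pow_incl_hom[OF M]]]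
    by (simp add: k_def)
  moreover have "rickart R ?P" using FR m unfolding fin_sigma_rickart_def k_def by simp
  ultimately have "direct_summand R (rmod_ker ?P ?Y (\<lambda>v. q0 (dsum_trunc M m v))) ?P"
    unfolding rickart_def rmod_ker_def by simp
  then obtain s where "s \<in> rmod_hom R ?Y ?P" "\<forall>y\<in>N. q0 (dsum_trunc M m (s y)) = y"
    using rmod_epi_section_if_kernel_summand[OF P submod_right_module[OF dsum_pow_right_module[OF M] N] q]
    by auto
  then show ?thesis
    using rel_projective_retract[OF rel_projective_dsum_pow[OF M M QP[unfolded quasi_projective_def]] qh]
    by auto
qed

definition dsum_high :: "('a, 'r, 'd) rmodule_scheme \<Rightarrow> nat \<Rightarrow> (nat \<Rightarrow> 'a) \<Rightarrow> nat \<Rightarrow> 'a" where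
  "dsum_high M n v = (\<lambda>i. if i < n then \<zero>\<^bsub>M\<^esub> else v i)"

definition dsum_shift_down :: "('a, 'r, 'd) rmodule_scheme \<Rightarrow> nat \<Rightarrow> (nat \<Rightarrow> 'a) \<Rightarrow> nat \<Rightarrow> 'a" where
  "dsum_shift_down M n v = (\<lambda>i. if i < n then v (i + n) else \<zero>\<^bsub>M\<^esub>)"

definition dsum_shift_up :: "('a, 'r, 'd) rmodule_scheme \<Rightarrow> nat \<Rightarrow> (nat \<Rightarrow> 'a) \<Rightarrow> nat \<Rightarrow> 'a" where
  "dsum_shift_up M n v = (\<lambda>i. if n \<le> i \<and> i < n + n then v (i - n) else \<zero>\<^bsub>M\<^esub>)"

text \<open>The endomorphism \<open>\<phi> \<oplus> id\<close> of \<open>M\<^sup>(\<^sup>2\<^sup>n\<^sup>) = M\<^sup>(\<^sup>n\<^sup>) \<oplus> M\<^sup>(\<^sup>n\<^sup>)\<close>.\<close>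

definition dsum_diag :: "('a, 'r, 'd) rmodule_scheme \<Rightarrow> nat \<Rightarrow> ((nat \<Rightarrow> 'a) \<Rightarrow> nat \<Rightarrow> 'a)
    \<Rightarrow> (nat \<Rightarrow> 'a) \<Rightarrow> nat \<Rightarrow> 'a" where
  "dsum_diag M n \<phi> w = \<phi> (dsum_trunc M n w) \<oplus>\<^bsub>dsum_pow M (n + n)\<^esub> dsum_high M n w"

lemma dsum_high_hom:
  assumes M: "right_module R M"
  shows "dsum_high M n \<in> rmod_hom R (dsum_pow M k) (dsum_pow M k)"
proof -
  interpret abelian_group M using M by (rule rmod_abelian_group)
  show ?thesis
    by (intro rmod_homI) (auto simp: dsum_pow_carrier dsum_high_def rmod_zero_smult[OF M] fun_eq_iff)
qed

lemma dsum_shift_down_hom: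
  assumes M: "right_module R M"
  shows "dsum_shift_down M n \<in> rmod_hom R (dsum_pow M (n + n)) (dsum_pow M n)"
proof -
  interpret abelian_group M using M by (rule rmod_abelian_group)
  show ?thesis
    by (intro rmod_homI) (auto simp: dsum_pow_carrier dsum_shift_down_def fun_eq_iff)
qed

lemma dsum_shift_up:
  assumes M: "right_module R M" and x: "x \<in> carrier (dsum_pow M n)"
  shows "dsum_shift_up M n x \<in> carrier (dsum_pow M (n + n))"
    and "dsum_shift_down M n (dsum_shift_up M n x) = x"
    and "dsum_trunc M n (dsum_shift_up M n x) = (\<lambda>i. \<zero>\<^bsub>M\<^esub>)"
    and "dsum_high M n (dsum_shift_up M n x) = dsum_shift_up M n x"
proof -
  interpret abelian_group M using M by (rule rmod_abelian_group)
  show "dsum_shift_up M n x \<in> carrier (dsum_pow M (n + n))"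
    using x by (auto simp: dsum_pow_carrier dsum_shift_up_def)
  show "dsum_shift_down M n (dsum_shift_up M n x) = x"
    using x by (auto simp: dsum_pow_carrier dsum_shift_up_def dsum_shift_down_def fun_eq_iff)
qed (auto simp: dsum_shift_up_def dsum_trunc_def dsum_high_def fun_eq_iff)

lemma dsum_diag_hom:
  assumes M: "right_module R M" and \<phi>: "\<phi> \<in> rmod_hom R (dsum_pow M n) (dsum_pow M n)"
  shows "dsum_diag M n \<phi> \<in> rmod_hom R (dsum_pow M (n + n)) (dsum_pow M (n + n))"
  unfolding dsum_diag_def
  by (rule rmod_hom_plus[OF _ dsum_high_hom[OF M] dsum_pow_right_module[OF M]])
    (rule rmod_hom_comp[OF dsum_trunc_hom[OF M] rmod_hom_comp[OF \<phi> dsum_pow_incl_hom[OF M]]], simp)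

lemma dsum_diag_simps:
  assumes M: "right_module R M" and \<phi>: "\<phi> \<in> rmod_hom R (dsum_pow M n) (dsum_pow M n)"
  shows "\<And>w. w \<in> carrier (dsum_pow M (n + n)) \<Longrightarrow>
      dsum_trunc M n (dsum_diag M n \<phi> w) = \<phi> (dsum_trunc M n w)"
    and "\<And>x. x \<in> carrier (dsum_pow M n) \<Longrightarrow> dsum_diag M n \<phi> x = \<phi> x"
    and "\<And>x. x \<in> carrier (dsum_pow M n) \<Longrightarrow>
      dsum_diag M n \<phi> (dsum_shift_up M n x) = dsum_shift_up M n x"
proof -
  interpret abelian_group M using M by (rule rmod_abelian_group)
  have P: "right_module R (dsum_pow M n)" using dsum_pow_right_module[OF M] .
  have \<phi>0: "\<phi> (\<lambda>i. \<zero>\<^bsub>M\<^esub>) = (\<lambda>i. \<zero>\<^bsub>M\<^esub>)" using rmod_hom_zero[OF \<phi> P P] by simp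
  show "dsum_trunc M n (dsum_diag M n \<phi> w) = \<phi> (dsum_trunc M n w)"
    if "w \<in> carrier (dsum_pow M (n + n))" for w
    using rmod_hom_closed[OF \<phi> rmod_hom_closed[OF dsum_trunc_hom[OF M] that]] by (auto simp: dsum_diag_def dsum_trunc_def dsum_high_def dsum_pow_carrier fun_eq_iff)
  show "dsum_diag M n \<phi> x = \<phi> x" if x: "x \<in> carrier (dsum_pow M n)" for x
  proof -
    have "dsum_high M n x = (\<lambda>i. \<zero>\<^bsub>M\<^esub>)"
      using x by (auto simp: dsum_high_def dsum_pow_carrier)
    then show ?thesis
      using dsum_pow_closed[OF M rmod_hom_closed[OF \<phi> x]] by (simp add: dsum_diag_def dsum_trunc_id[OF x])
  qed
  show "dsum_diag M n \<phi> (dsum_shift_up M n x) = dsum_shift_up M n x"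
    if x: "x \<in> carrier (dsum_pow M n)" for x
    using dsum_shift_up[OF M x] dsum_pow_closed[OF M] \<phi>0 by (simp add: dsum_diag_def)
qed

lemma dsum_diag_image:
  assumes M: "right_module R M" and \<phi>: "\<phi> \<in> rmod_hom R (dsum_pow M n) (dsum_pow M n)"
  defines "I \<equiv> \<phi> ` carrier (dsum_pow M n)"
    and "T \<equiv> dsum_diag M n \<phi> ` carrier (dsum_pow M (n + n))"
  shows "I \<subseteq> T"
    and "dsum_trunc M n \<in> rmod_hom R (subm (dsum_pow M (n + n)) T) (subm (dsum_pow M n) I)"
    and "(\<lambda>v. \<phi> (dsum_shift_down M n v)) \<in> rmod_epi R (subm (dsum_pow M (n + n)) T) (subm (dsum_pow M n) I)"
proof -
  let ?P = "dsum_pow M n" and ?P2 = "dsum_pow M (n + n)"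
  have P2: "right_module R ?P2" using dsum_pow_right_module[OF M] .
  note diag = dsum_diag_simps[OF M \<phi>]
  have T: "submod R T ?P2" unfolding T_def using submod_image[OF dsum_diag_hom[OF M \<phi>] P2 P2] .
  show "I \<subseteq> T"
  proof
    fix y assume "y \<in> I"
    then obtain x where "x \<in> carrier ?P" "y = \<phi> x" unfolding I_def by blast
    then show "y \<in> T"
      unfolding T_def
      using diag(2) dsum_pow_carrier_mono[OF M, of n "n + n"] by (intro rev_image_eqI[of x]) auto
  qed
  have "dsum_trunc M n y \<in> I" if "y \<in> T" for y
    using that diag(1) rmod_hom_closed[OF dsum_trunc_hom[OF M]] unfolding I_def T_def by auto
  then show "dsum_trunc M n \<in> rmod_hom R (subm ?P2 T) (subm ?P I)"
    by (intro rmod_hom_into_subm[OF rmod_hom_restrict_subm[OF dsum_trunc_hom[OF M] T]]) auto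
  let ?\<psi> = "\<lambda>v. \<phi> (dsum_shift_down M n v)"
  have "?\<psi> \<in> rmod_hom R (subm ?P2 T) (subm ?P I)"
    using rmod_hom_restrict_subm[OF rmod_hom_comp[OF dsum_shift_down_hom[OF M] \<phi>] T]
      submodD(1)[OF T] rmod_hom_closed[OF dsum_shift_down_hom[OF M]]
    unfolding I_def by (intro rmod_hom_into_subm) auto
  moreover have "I \<subseteq> ?\<psi> ` T"
    using dsum_shift_up[OF M] diag(3) unfolding I_def T_def by (auto intro!: rev_image_eqI)
  ultimately show "?\<psi> \<in> rmod_epi R (subm ?P2 T) (subm ?P I)"
    unfolding rmod_epi_def using rmod_hom_closed by fastforce
qed

lemma rickart_dsum_pow_if_quasi_projective:
  fixes R :: "('r, 'c) ring_scheme" and M :: "('a, 'r, 'd) rmodule_scheme"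
  assumes M: "right_module R M" and n: "n > 0"
    and QP: "\<And>T. submod R T (dsum_pow M (n + n)) \<Longrightarrow> fin_gen_by R (subm (dsum_pow M (n + n)) T) M
      \<Longrightarrow> quasi_projective R (subm (dsum_pow M (n + n)) T)"
  shows "rickart R (dsum_pow M n)"
  unfolding rickart_def
proof
  fix \<phi> assume \<phi>: "\<phi> \<in> rmod_hom R (dsum_pow M n) (dsum_pow M n)"
  let ?P = "dsum_pow M n" and ?P2 = "dsum_pow M (n + n)"
  let ?I = "\<phi> ` carrier ?P" and ?T = "dsum_diag M n \<phi> ` carrier ?P2"
    \<comment> \<open>\<open>?T\<close> is a copy of \<open>?I \<oplus> M\<^sup>(\<^sup>n\<^sup>)\<close>\<close>
  have P: "right_module R ?P" and P2: "right_module R ?P2" using dsum_pow_right_module[OF M] by auto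
  note image = dsum_diag_image[OF M \<phi>]
  have I: "submod R ?I ?P" using submod_image[OF \<phi> P P] .
  have T: "submod R ?T ?P2" using submod_image[OF dsum_diag_hom[OF M \<phi>] P2 P2] .
  have "fin_gen_by R (subm ?P2 ?T) M"
    using rmod_epi_onto_image[OF dsum_diag_hom[OF M \<phi>]] n unfolding fin_gen_by_def by auto
  then have "rel_projective R (subm ?P2 ?T) (subm ?P2 ?T)"
    using QP[OF T] unfolding quasi_projective_def by blast
  moreover have "(\<lambda>y. y) \<in> rmod_hom R (subm ?P ?I) (subm ?P2 ?T)"
    using rmod_hom_comp[OF rmod_hom_subm_incl[OF I] dsum_pow_incl_hom[OF M, of n "n + n"]] image(1)
    by (intro rmod_hom_into_subm) auto
  ultimately have "rel_projective R (subm ?P ?I) (subm ?P2 ?T)"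
    by (rule rel_projective_retract[OF _ image(2)]) (auto simp: dsum_trunc_id rmod_hom_closed[OF \<phi>])
  then obtain h where h: "h \<in> rmod_hom R (subm ?P ?I) (subm ?P2 ?T)"
    and split: "\<forall>y\<in>?I. \<phi> (dsum_shift_down M n (h y)) = y"
    using rel_projectiveD[OF _ submod_right_module[OF P I] image(3) rmod_hom_id] by force
  have "(\<lambda>y. dsum_shift_down M n (h y)) \<in> rmod_hom R (subm ?P ?I) ?P"
    using rmod_hom_comp[OF h rmod_hom_comp[OF rmod_hom_subm_incl[OF T] dsum_shift_down_hom[OF M]]] .
  then show "direct_summand R (rmod_ker ?P ?P \<phi>) ?P"
    using direct_summand_kernel_if_section[OF P P \<phi>] split by blast
qed

theorem mainTheorem5:
  fixes R :: "('r, 'c) ring_scheme" and M :: "('a, 'r) rmodule"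
  assumes "right_module R M"
  shows "((quasi_projective R M \<and> fin_sigma_rickart R M)
     \<longleftrightarrow> (\<forall>n>0. \<forall>D N. direct_summand R D (dsum_pow M n) \<and> submod R N (dsum_pow M n) \<and> N \<subseteq> D
              \<and> fin_gen_by R (subm (dsum_pow M n) N) M
            \<longrightarrow> rel_projective R (subm (dsum_pow M n) N) M))
     \<and> ((quasi_projective R M \<and> fin_sigma_rickart R M)
     \<longleftrightarrow> (\<forall>n>0. \<forall>D N. direct_summand R D (dsum_pow M n) \<and> submod R N (dsum_pow M n) \<and> N \<subseteq> D
              \<and> fin_gen_by R (subm (dsum_pow M n) N) M
            \<longrightarrow> quasi_projective R (subm (dsum_pow M n) N)))"
  (is "(?a \<longleftrightarrow> ?b) \<and> (?a \<longleftrightarrow> ?c)")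
proof -
  note M = \<open>right_module R M\<close>
  have "?a \<Longrightarrow> ?b" using rel_projective_fin_gen_submod[OF M] by blast
  moreover have "?b \<Longrightarrow> ?c" using quasi_projective_if_rel_projective_fin_gen[OF M] by blast
  moreover have "?a" if c: "?c"
  proof
    have QPc: "\<And>n T. n > 0 \<Longrightarrow> submod R T (dsum_pow M n) \<Longrightarrow> fin_gen_by R (subm (dsum_pow M n) T) M
        \<Longrightarrow> quasi_projective R (subm (dsum_pow M n) T)"
      using c direct_summand_carrier[OF dsum_pow_right_module[OF M]] submodD(1) by blast
    then show "fin_sigma_rickart R M"
      unfolding fin_sigma_rickart_def using rickart_dsum_pow_if_quasi_projective[OF M] by simp
    have "fin_gen_by R (subm (dsum_pow M 1) (carrier (dsum_pow M 1))) M"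
      unfolding fin_gen_by_def rmod_epi_def by (auto intro!: exI[of _ 1] rmod_homI)
    then show "quasi_projective R M"
      using quasi_projective_if_dsum_pow_1[OF M] QPc[of 1 "carrier (dsum_pow M 1)"]
        submod_carrier[OF dsum_pow_right_module[OF M]] by simp
  qed
  ultimately show ?thesis by blast
qed

end
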